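(* Let $N_{\rm S}\ge0$, $r=\sinh^{-1}\sqrt{N_{\rm S}}$, $\kappa\ge0$, $n_{\rm B}\ge\max\{\kappa-1,0\}$. Let the two-mode squeezed vacuum $\hat S_2(r)|0\rangle_S|0\rangle_A$ be prepared and mode $S$ sent through $\mathcal N_{\kappa,n_{\rm B}}$ (output mode $R$), while $A$ is kept noiselessly. Perform a Bell measurement: interfere $R$ and $A$ on a balanced beamsplitter and homodyne the $\hat p$ quadrature of one output port and the $\hat q$ quadrature of the other. The classical Fisher information with respect to $n_{\rm B}$ of the joint outcome is $$\mathcal I_{\rm Bell}=\frac{1}{\Big(n_{\rm B}+\kappa N_{\rm S}-2\sqrt{\kappa N_{\rm S}(N_{\rm S}+1)}+N_{\rm S}+1\Big)^2}.$$
   Context: $\hat S_2(r)=\exp[-r(\hat a_S\hat a_A-\hat a_S^\dagger\hat a_A^\dagger)]$; the signal mode of $\hat S_2(r)|0,0\rangle$ has mean photon number $\sinh^2r$. Quadratures are $\hat q=\hat a+\hat a^\dagger$, $\hat p=-i(\hat a-\hat a^\dagger)$ (vacuum covariance is the identity). $\mathcal N_{\kappa,n_{\rm B}}$ is the single-mode phase-covariant bosonic Gaussian channel mapping quadrature mean $\bar x\mapsto\sqrt\kappa\,\bar x$ and covariance $V\mapsto\kappa V+(2n_{\rm B}+1-\kappa)I_2$. Classical Fisher information of an outcome density $p(x|\theta)$ is $\int(\partial_\theta\log p)^2p\,dx$. *)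

theory Defs
  imports "HOL-Analysis.Analysis"
begin

text \<open>Quadrature ordering of a two-mode system:
  index 0 = q of mode 1, 1 = p of mode 1, 2 = q of mode 2, 3 = p of mode 2.
  Covariance matrices (vacuum = identity) are represented as functions nat => nat => real,
  meaningful for indices below 4. All first moments stay zero throughout.\<close>

definition mat4_mult :: "(nat \<Rightarrow> nat \<Rightarrow> real) \<Rightarrow> (nat \<Rightarrow> nat \<Rightarrow> real) \<Rightarrow> nat \<Rightarrow> nat \<Rightarrow> real" where
  "mat4_mult A B i j = (\<Sum>k<4. A i k * B k j)"

definition mat4_transpose :: "(nat \<Rightarrow> nat \<Rightarrow> real) \<Rightarrow> nat \<Rightarrow> nat \<Rightarrow> real" where
  "mat4_transpose A i j = A j i"

text \<open>Covariance matrix of the two-mode squeezed vacuum S_2(r)|0,0>, modes (S, A).\<close>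
definition tmsv_cov :: "real \<Rightarrow> nat \<Rightarrow> nat \<Rightarrow> real" where
  "tmsv_cov r i j =
     (if i = j then cosh (2 * r)
      else if (i = 0 \<and> j = 2) \<or> (i = 2 \<and> j = 0) then sinh (2 * r)
      else if (i = 1 \<and> j = 3) \<or> (i = 3 \<and> j = 1) then - sinh (2 * r)
      else 0)"

text \<open>The channel N_{kappa,nB} acting on the first mode (S), identity on the second (A):
  V |-> X V X^T + Y with X = sqrt kappa I_2 (+) I_2, Y = (2 nB + 1 - kappa) I_2 (+) 0.\<close>
definition channel_on_first :: "real \<Rightarrow> real \<Rightarrow> (nat \<Rightarrow> nat \<Rightarrow> real) \<Rightarrow> nat \<Rightarrow> nat \<Rightarrow> real" where
  "channel_on_first \<kappa> nB V i j =
     (let s = (\<lambda>k::nat. if k < 2 then sqrt \<kappa> else 1) in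
      s i * V i j * s j + (if i = j \<and> i < 2 then 2 * nB + 1 - \<kappa> else 0))"

text \<open>Balanced beamsplitter on modes (R, A): output modes c = (R + A)/sqrt 2, d = (R - A)/sqrt 2.
  Symplectic matrix acting on (q_R, p_R, q_A, p_A), giving (q_c, p_c, q_d, p_d).\<close>
definition bs_mat :: "nat \<Rightarrow> nat \<Rightarrow> real" where
  "bs_mat i j =
     (if i = 0 then (if j = 0 \<or> j = 2 then 1 / sqrt 2 else 0)
      else if i = 1 then (if j = 1 \<or> j = 3 then 1 / sqrt 2 else 0)
      else if i = 2 then (if j = 0 then 1 / sqrt 2 else if j = 2 then - 1 / sqrt 2 else 0)
      else if i = 3 then (if j = 1 then 1 / sqrt 2 else if j = 3 then - 1 / sqrt 2 else 0)
      else 0)"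

definition symplectic_action :: "(nat \<Rightarrow> nat \<Rightarrow> real) \<Rightarrow> (nat \<Rightarrow> nat \<Rightarrow> real) \<Rightarrow> nat \<Rightarrow> nat \<Rightarrow> real" where
  "symplectic_action S V = mat4_mult (mat4_mult S V) (mat4_transpose S)"

definition bell_output_cov :: "real \<Rightarrow> real \<Rightarrow> real \<Rightarrow> nat \<Rightarrow> nat \<Rightarrow> real" where
  "bell_output_cov r \<kappa> nB = symplectic_action bs_mat (channel_on_first \<kappa> nB (tmsv_cov r))"

text \<open>Density of a centred bivariate Gaussian with covariance [[a, b], [c, d]].\<close>
definition gauss2_density :: "real \<Rightarrow> real \<Rightarrow> real \<Rightarrow> real \<Rightarrow> real \<times> real \<Rightarrow> real" where
  "gauss2_density a b c d z =
     (let D = a * d - b * c; x = fst z; y = snd z in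
      exp (- (d * x\<^sup>2 - (b + c) * x * y + a * y\<^sup>2) / (2 * D)) / (2 * pi * sqrt D))"

text \<open>Joint outcome density of the Bell measurement: homodyne of p on port c (index 1)
  and of q on port d (index 2); outcome z = (p_c, q_d).\<close>
definition bell_density :: "real \<Rightarrow> real \<Rightarrow> real \<Rightarrow> real \<times> real \<Rightarrow> real" where
  "bell_density r \<kappa> nB z =
     (let W = bell_output_cov r \<kappa> nB in gauss2_density (W 1 1) (W 1 2) (W 2 1) (W 2 2) z)"

definition bell_fisher :: "real \<Rightarrow> real \<Rightarrow> real \<Rightarrow> real" where
  "bell_fisher r \<kappa> nB =
     (\<integral>z. (deriv (\<lambda>t. ln (bell_density r \<kappa> t z)) nB)\<^sup>2 * bell_density r \<kappa> nB z \<partial>(lborel :: (real \<times> real) measure))"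

end

theory Submission
  imports Defs "HOL-Probability.Probability"
begin

text \<open>After the channel and the balanced beamsplitter the two homodyne outcomes are
  uncorrelated centred Gaussians with the common variance
  \<open>v = nB + (sqrt (\<kappa> NS) - sqrt (NS + 1))\<^sup>2\<close>, so the joint outcome is an isotropic planar
  Gaussian whose variance moves with unit speed in \<open>nB\<close>. Its score with respect to \<open>v\<close> is
  \<open>a(x) + a(y)\<close> with \<open>a(x) = (x\<^sup>2 - v) / (2 v\<^sup>2)\<close>, a sum of two independent centred terms;
  since \<open>E X\<^sup>4 = 3 v\<^sup>2\<close> each has second moment \<open>1 / (2 v\<^sup>2)\<close>, giving Fisher information
  \<open>1 / v\<^sup>2\<close>.\<close>

lemma (in pair_sigma_finite) has_bochner_integral_mult_fst_snd:
  fixes f :: "'a \<Rightarrow> real" and g :: "'b \<Rightarrow> real"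
  assumes f: "has_bochner_integral M1 f a" and g: "has_bochner_integral M2 g b"
  shows "has_bochner_integral (M1 \<Otimes>\<^sub>M M2) (\<lambda>z. f (fst z) * g (snd z)) (a * b)"
proof -
  have [measurable]: "f \<in> borel_measurable M1" "g \<in> borel_measurable M2"
    using f g by (auto dest: borel_measurable_has_bochner_integral)
  have "integrable M1 f" "integrable M2 g"
    using f g by (auto simp: has_bochner_integral_iff)
  then have int: "integrable (M1 \<Otimes>\<^sub>M M2) (\<lambda>z. f (fst z) * g (snd z))"
    by (intro Fubini_integrable) (auto simp: abs_mult)
  have "integral\<^sup>L (M1 \<Otimes>\<^sub>M M2) (\<lambda>z. f (fst z) * g (snd z)) = (\<integral>x. (\<integral>y. f x * g y \<partial>M2) \<partial>M1)"
    using integral_fst'[OF int] by simp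
  also have "\<dots> = a * b"
    using f g by (simp add: has_bochner_integral_iff)
  finally show ?thesis
    using int by (simp add: has_bochner_integral_iff)
qed

lemma has_bochner_integral_normal_density:
  "\<sigma> > 0 \<Longrightarrow> has_bochner_integral lborel (normal_density \<mu> \<sigma>) 1"
  by (simp add: has_bochner_integral_iff)

lemma has_bochner_integral_normal_density_power2:
  assumes "\<sigma> > 0"
  shows "has_bochner_integral lborel (\<lambda>x. normal_density 0 \<sigma> x * x\<^sup>2) (\<sigma>\<^sup>2)"
  using normal_moment_even[of \<sigma> 0 1] assms by simp

lemma has_bochner_integral_normal_density_power4:
  assumes "\<sigma> > 0"
  shows "has_bochner_integral lborel (\<lambda>x. normal_density 0 \<sigma> x * x ^ 4) (3 * \<sigma> ^ 4)"
  using normal_moment_even[of \<sigma> 0 2] assms by (simp add: fact_numeral field_simps)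

lemma has_bochner_integral_normal_density_square_centred:
  assumes "\<sigma> > 0"
  shows "has_bochner_integral lborel (\<lambda>x. normal_density 0 \<sigma> x * (x\<^sup>2 - \<sigma>\<^sup>2)) 0"
proof -
  have "has_bochner_integral lborel
          (\<lambda>x. normal_density 0 \<sigma> x * x\<^sup>2 - \<sigma>\<^sup>2 * normal_density 0 \<sigma> x) (\<sigma>\<^sup>2 - \<sigma>\<^sup>2 * 1)"
    using assms by (intro has_bochner_integral_diff has_bochner_integral_mult_right
        has_bochner_integral_normal_density_power2)
       (simp_all add: has_bochner_integral_normal_density)
  then show ?thesis by (simp add: algebra_simps)
qed

lemma has_bochner_integral_normal_density_square_centred_power2:
  assumes "\<sigma> > 0"
  shows "has_bochner_integral lborel (\<lambda>x. normal_density 0 \<sigma> x * (x\<^sup>2 - \<sigma>\<^sup>2)\<^sup>2) (2 * \<sigma> ^ 4)"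
proof -
  have "has_bochner_integral lborel
          (\<lambda>x. normal_density 0 \<sigma> x * x ^ 4 - 2 * \<sigma>\<^sup>2 * (normal_density 0 \<sigma> x * x\<^sup>2)
               + \<sigma> ^ 4 * normal_density 0 \<sigma> x)
          (3 * \<sigma> ^ 4 - 2 * \<sigma>\<^sup>2 * \<sigma>\<^sup>2 + \<sigma> ^ 4 * 1)"
    using assms by (intro has_bochner_integral_add has_bochner_integral_diff
        has_bochner_integral_mult_right has_bochner_integral_normal_density_power2
        has_bochner_integral_normal_density_power4)
       (simp_all add: has_bochner_integral_normal_density)
  then show ?thesis by (simp add: power2_diff algebra_simps power4_eq_xxxx power2_eq_square)
qed

definition isotropic_gauss2 :: "real \<Rightarrow> real \<times> real \<Rightarrow> real" where
  "isotropic_gauss2 v z = exp (- ((fst z)\<^sup>2 + (snd z)\<^sup>2) / (2 * v)) / (2 * pi * v)"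

lemma isotropic_gauss2_eq_normal_density_product:
  assumes "v > 0"
  shows "isotropic_gauss2 v z = normal_density 0 (sqrt v) (fst z) * normal_density 0 (sqrt v) (snd z)"
proof -
  have "sqrt (2 * pi * v) * sqrt (2 * pi * v) = 2 * pi * v"
    using assms by simp
  then show ?thesis
    using assms by (simp add: isotropic_gauss2_def normal_density_def exp_add[symmetric] diff_divide_distrib)
qed

lemma isotropic_gauss2_score:
  assumes "v > 0"
  shows "((\<lambda>t. ln (isotropic_gauss2 t z)) has_real_derivative
           ((fst z)\<^sup>2 + (snd z)\<^sup>2) / (2 * v\<^sup>2) - 1 / v) (at v)"
proof -
  let ?s = "(fst z)\<^sup>2 + (snd z)\<^sup>2"
  have "((\<lambda>t. - s / (2 * t) - ln (2 * pi) - ln t) has_real_derivative s / (2 * v\<^sup>2) - 1 / v) (at v)"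
    for s
    using assms by - (rule derivative_eq_intros refl | simp add: power2_eq_square)+
  moreover have "v \<in> {0<..}"
    using assms by simp
  moreover have "- ?s / (2 * t) - ln (2 * pi) - ln t = ln (isotropic_gauss2 t z)" if "t \<in> {0<..}" for t
    using that by (simp add: isotropic_gauss2_def ln_div ln_mult)
  ultimately show ?thesis
    by (rule has_field_derivative_transform_within_open[OF _ open_greaterThan])
qed

lemma deriv_ln_isotropic_gauss2_shift:
  fixes p :: "real \<Rightarrow> real \<times> real \<Rightarrow> real"
  assumes pos: "t\<^sub>0 + c > 0" and p: "\<And>t. t + c > 0 \<Longrightarrow> p t = isotropic_gauss2 (t + c)"
  shows "deriv (\<lambda>t. ln (p t z)) t\<^sub>0 = ((fst z)\<^sup>2 + (snd z)\<^sup>2) / (2 * (t\<^sub>0 + c)\<^sup>2) - 1 / (t\<^sub>0 + c)"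
proof (rule DERIV_imp_deriv)
  have shift: "((\<lambda>t. t + c) has_real_derivative 1) (at t\<^sub>0)"
    by (auto intro!: derivative_eq_intros)
  have "((\<lambda>t. ln (isotropic_gauss2 (t + c) z)) has_real_derivative
          ((fst z)\<^sup>2 + (snd z)\<^sup>2) / (2 * (t\<^sub>0 + c)\<^sup>2) - 1 / (t\<^sub>0 + c)) (at t\<^sub>0)"
    using DERIV_chain2[OF isotropic_gauss2_score[OF pos] shift] by simp
  moreover have "t\<^sub>0 \<in> {-c<..}"
    using pos by simp
  moreover have "ln (isotropic_gauss2 (t + c) z) = ln (p t z)" if "t \<in> {-c<..}" for t
    using p that by simp
  ultimately show "((\<lambda>t. ln (p t z)) has_real_derivative
          ((fst z)\<^sup>2 + (snd z)\<^sup>2) / (2 * (t\<^sub>0 + c)\<^sup>2) - 1 / (t\<^sub>0 + c)) (at t\<^sub>0)"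
    by (rule has_field_derivative_transform_within_open[OF _ open_greaterThan])
qed

lemma integral_isotropic_gauss2_score_sq:
  assumes "v > 0"
  shows "(\<integral>z. (((fst z)\<^sup>2 + (snd z)\<^sup>2) / (2 * v\<^sup>2) - 1 / v)\<^sup>2 * isotropic_gauss2 v z
            \<partial>(lborel :: (real \<times> real) measure)) = 1 / v\<^sup>2"
proof -
  let ?\<phi> = "normal_density 0 (sqrt v)"
  let ?a = "\<lambda>x. ?\<phi> x * (x\<^sup>2 - v)" and ?b = "\<lambda>x. ?\<phi> x * (x\<^sup>2 - v)\<^sup>2"
  have sv: "sqrt v > 0" and v2: "(sqrt v)\<^sup>2 = v" and v4: "(sqrt v) ^ 4 = v\<^sup>2"
    using assms by (auto simp: power4_eq_xxxx power2_eq_square)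
  have a: "has_bochner_integral lborel ?a 0"
    using has_bochner_integral_normal_density_square_centred[OF sv] by (simp only: v2)
  have b: "has_bochner_integral lborel ?b (2 * v\<^sup>2)"
    using has_bochner_integral_normal_density_square_centred_power2[OF sv] by (simp only: v2 v4)
  have "has_bochner_integral (lborel \<Otimes>\<^sub>M lborel)
          (\<lambda>z. (?b (fst z) * ?\<phi> (snd z) + 2 * (?a (fst z) * ?a (snd z)) + ?\<phi> (fst z) * ?b (snd z)) / (4 * v ^ 4))
          ((2 * v\<^sup>2 * 1 + 2 * (0 * 0) + 1 * (2 * v\<^sup>2)) / (4 * v ^ 4))"
    using a b has_bochner_integral_normal_density[OF sv, of 0]
    by (intro has_bochner_integral_divide_zero has_bochner_integral_add has_bochner_integral_mult_right
        lborel_pair.has_bochner_integral_mult_fst_snd)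
  moreover have "(\<lambda>z. (?b (fst z) * ?\<phi> (snd z) + 2 * (?a (fst z) * ?a (snd z)) + ?\<phi> (fst z) * ?b (snd z)) / (4 * v ^ 4))
      = (\<lambda>z. (((fst z)\<^sup>2 + (snd z)\<^sup>2) / (2 * v\<^sup>2) - 1 / v)\<^sup>2 * isotropic_gauss2 v z)"
    using assms by (auto simp: isotropic_gauss2_eq_normal_density_product field_simps power2_eq_square power4_eq_xxxx)
  ultimately show ?thesis
    using assms by (simp add: lborel_prod has_bochner_integral_integral_eq power4_eq_xxxx power2_eq_square)
qed

lemma gauss2_density_scalar:
  assumes "w > 0"
  shows "gauss2_density w 0 0 w = isotropic_gauss2 w"
proof
  fix z :: "real \<times> real"
  have "sqrt (w * w) = w" and
    "- (w * (fst z)\<^sup>2 + w * (snd z)\<^sup>2) / (2 * (w * w)) = - ((fst z)\<^sup>2 + (snd z)\<^sup>2) / (2 * w)"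
    using assms by (simp_all add: field_simps)
  then show "gauss2_density w 0 0 w z = isotropic_gauss2 w z"
    by (simp add: gauss2_density_def isotropic_gauss2_def)
qed

lemma bell_output_cov_entries:
  assumes "\<kappa> \<ge> 0"
  shows "bell_output_cov r \<kappa> nB 1 1 = (\<kappa> * cosh (2*r) + 2*nB + 1 - \<kappa> + cosh (2*r) - 2 * sqrt \<kappa> * sinh (2*r)) / 2"
    and "bell_output_cov r \<kappa> nB 2 2 = (\<kappa> * cosh (2*r) + 2*nB + 1 - \<kappa> + cosh (2*r) - 2 * sqrt \<kappa> * sinh (2*r)) / 2"
    and "bell_output_cov r \<kappa> nB 1 2 = 0"
    and "bell_output_cov r \<kappa> nB 2 1 = 0"
  using assms
  by (simp_all add: bell_output_cov_def symplectic_action_def mat4_mult_def mat4_transpose_def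
      lessThan_nat_numeral bs_mat_def channel_on_first_def tmsv_cov_def field_simps)

definition bell_excess_noise :: "real \<Rightarrow> real \<Rightarrow> real" where
  "bell_excess_noise \<kappa> NS = \<kappa> * NS - 2 * sqrt (\<kappa> * NS * (NS + 1)) + NS + 1"

lemma bell_excess_noise_eq_square:
  assumes "NS \<ge> 0" and "\<kappa> \<ge> 0"
  shows "bell_excess_noise \<kappa> NS = (sqrt (\<kappa> * NS) - sqrt (NS + 1))\<^sup>2"
proof -
  have "sqrt (\<kappa> * NS * (NS + 1)) = sqrt (\<kappa> * NS) * sqrt (NS + 1)"
    by (simp only: real_sqrt_mult)
  then show ?thesis
    using assms by (simp add: bell_excess_noise_def power2_diff)
qed

lemma bell_output_variance_pos:
  assumes "NS \<ge> 0" and "\<kappa> \<ge> 0" and "nB \<ge> max (\<kappa> - 1) 0"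
  shows "nB + bell_excess_noise \<kappa> NS > 0"
proof (cases "\<kappa> \<le> 1")
  case True
  then have "sqrt (\<kappa> * NS) < sqrt (NS + 1)"
    using mult_right_mono[OF True assms(1)] by simp
  then have "bell_excess_noise \<kappa> NS > 0"
    using assms(1,2) by (simp add: bell_excess_noise_eq_square)
  then show ?thesis
    using assms(3) by simp
next
  case False
  then show ?thesis
    using assms by (simp add: bell_excess_noise_eq_square add_pos_nonneg)
qed

lemma bell_output_cov_arsinh:
  fixes NS \<kappa> nB :: real
  assumes "NS \<ge> 0" and "\<kappa> \<ge> 0"
  defines "W \<equiv> bell_output_cov (arsinh (sqrt NS)) \<kappa> nB"
  shows "W 1 1 = nB + bell_excess_noise \<kappa> NS" and "W 2 2 = nB + bell_excess_noise \<kappa> NS"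
    and "W 1 2 = 0" and "W 2 1 = 0"
proof -
  let ?r = "arsinh (sqrt NS)"
  have "cosh ?r = sqrt (NS + 1)"
    using assms(1) by (simp add: cosh_arsinh_real)
  then have c: "cosh (2 * ?r) = 2 * NS + 1" and s: "sinh (2 * ?r) = 2 * sqrt NS * sqrt (NS + 1)"
    using assms(1) by (simp_all add: cosh_double sinh_double)
  have sqrt_prod: "sqrt (\<kappa> * NS * (NS + 1)) = sqrt \<kappa> * sqrt NS * sqrt (NS + 1)"
    by (simp only: real_sqrt_mult)
  show "W 1 1 = nB + bell_excess_noise \<kappa> NS" and "W 2 2 = nB + bell_excess_noise \<kappa> NS"
    unfolding W_def bell_output_cov_entries[OF assms(2)] bell_excess_noise_def sqrt_prod c s
    by (simp_all add: field_simps)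
  show "W 1 2 = 0" and "W 2 1 = 0"
    unfolding W_def using bell_output_cov_entries[OF assms(2)] by simp_all
qed

lemma bell_density_arsinh:
  assumes "NS \<ge> 0" and "\<kappa> \<ge> 0" and "t + bell_excess_noise \<kappa> NS > 0"
  shows "bell_density (arsinh (sqrt NS)) \<kappa> t = isotropic_gauss2 (t + bell_excess_noise \<kappa> NS)"
  unfolding bell_density_def Let_def bell_output_cov_arsinh[OF assms(1,2)]
  by (rule gauss2_density_scalar[OF assms(3), THEN fun_cong, THEN ext])

theorem mainTheorem7:
  fixes NS \<kappa> nB r :: real
  assumes "NS \<ge> 0" and "\<kappa> \<ge> 0" and "nB \<ge> max (\<kappa> - 1) 0"
    and "r = arsinh (sqrt NS)"
  shows "bell_fisher r \<kappa> nB =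
           1 / (nB + \<kappa> * NS - 2 * sqrt (\<kappa> * NS * (NS + 1)) + NS + 1)\<^sup>2"
proof -
  define v where "v = nB + bell_excess_noise \<kappa> NS"
  have v: "v > 0"
    unfolding v_def using bell_output_variance_pos[OF assms(1-3)] .
  have density: "bell_density r \<kappa> t = isotropic_gauss2 (t + bell_excess_noise \<kappa> NS)"
    if "t + bell_excess_noise \<kappa> NS > 0" for t
    unfolding assms(4) using bell_density_arsinh[OF assms(1,2) that] .
  have score: "deriv (\<lambda>t. ln (bell_density r \<kappa> t z)) nB = ((fst z)\<^sup>2 + (snd z)\<^sup>2) / (2 * v\<^sup>2) - 1 / v"
    for z
    unfolding v_def by (rule deriv_ln_isotropic_gauss2_shift[OF v[unfolded v_def] density])
  have "bell_fisher r \<kappa> nB = 1 / v\<^sup>2"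
    unfolding bell_fisher_def score density[OF v[unfolded v_def], folded v_def]
    by (rule integral_isotropic_gauss2_score_sq[OF v])
  then show ?thesis
    by (simp add: v_def bell_excess_noise_def algebra_simps)
qed

end
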